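(* Assume $\mu p<1$ and $q\neq \mu p$, and consider the model on the infinite Galton–Watson tree with the information starting at the vertex $x$ at distance $r\ge 0$ from the root. Then $$ P_r (\operatorname{diam} (\mathscr{C}) \geq 2n) \leq \frac{1 - (q / \mu p)^{r + 1}}{1 - (q / \mu p)} \, (\mu p)^n \quad \text{for all integers } n > r. $$
   Context: Let $(p_k)_{k\ge 0}$ be an offspring distribution with $p_0=0$ and finite mean $\mu=\sum_k kp_k$. Let $\mathbb{T}$ be a Galton–Watson tree with root $0$ and offspring distribution $(p_k)$. Fix $p,q\in(0,1)$. Each edge of the tree is replaced by two arrows: the arrow parent $\to$ offspring is open with probability $p$ and the arrow offspring $\to$ parent is open with probability $q$, all arrows independently of each other and of the tree. The source of the information is a vertex $x$ at distance $r$ from the root chosen independently of the offspring numbers of its ancestors and of the percolation (e.g. the vertex obtained from the root by always moving to the first offspring). The cluster is $\mathscr{C}=\{y: \text{there is a directed open path from } x \text{ to } y\}$ (including $x$). Its diameter is $\operatorname{diam}(\mathscr{C})=\max\{d(y,z): y,z\in\mathscr{C}\}$, where $d$ is the graph distance in the tree. $P_r$ denotes probability over both the tree and the percolation when the source is at distance $r$ from the root. *)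

theory Defs
  imports "HOL-Probability.Probability"
begin

text \<open>Vertices of the (Ulam--Harris labelled) Galton--Watson tree are lists of naturals;
  the root is the empty list, the children of v are v@[i] for i < number of offspring of v.
  A random environment assigns to every label v a triple
  (offspring number of v, arrow parent(v) -> v open, arrow v -> parent(v) open).
  The arrow components of the root are unused.\<close>

type_synonym env = "nat list \<Rightarrow> nat \<times> bool \<times> bool"

definition in_tree :: "env \<Rightarrow> nat list \<Rightarrow> bool" where
  "in_tree \<omega> v \<longleftrightarrow> (\<forall>k<length v. v ! k < fst (\<omega> (take k v)))"

definition open_arrow :: "env \<Rightarrow> nat list \<Rightarrow> nat list \<Rightarrow> bool" where
  "open_arrow \<omega> a b \<longleftrightarrow>
     (in_tree \<omega> b \<and> b \<noteq> [] \<and> a = butlast b \<and> fst (snd (\<omega> b))) \<or>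
     (in_tree \<omega> a \<and> a \<noteq> [] \<and> b = butlast a \<and> snd (snd (\<omega> a)))"

definition cluster :: "env \<Rightarrow> nat list \<Rightarrow> nat list set" where
  "cluster \<omega> x = {y. (x, y) \<in> {(a, b). open_arrow \<omega> a b}\<^sup>*}"

fun lcp :: "nat list \<Rightarrow> nat list \<Rightarrow> nat list" where
  "lcp (a # as) (b # bs) = (if a = b then a # lcp as bs else [])"
| "lcp _ _ = []"

definition tree_dist :: "nat list \<Rightarrow> nat list \<Rightarrow> nat" where
  "tree_dist y z = length y + length z - 2 * length (lcp y z)"

definition diam :: "env \<Rightarrow> nat list \<Rightarrow> enat" where
  "diam \<omega> x = (SUP y\<in>cluster \<omega> x. SUP z\<in>cluster \<omega> x. enat (tree_dist y z))"

definition source :: "nat \<Rightarrow> nat list" where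
  "source r = replicate r 0"

text \<open>joint law of tree and percolation: i.i.d. over labels\<close>
definition GW_env :: "nat pmf \<Rightarrow> real \<Rightarrow> real \<Rightarrow> env measure" where
  "GW_env off p q = PiM UNIV (\<lambda>_. measure_pmf (pair_pmf off (pair_pmf (bernoulli_pmf p) (bernoulli_pmf q))))"

end

theory Submission
  imports Defs "HOL-Probability.Product_PMF"
begin

(* An open path leaving the source x at depth r first climbs i \<le> r steps towards the root
   (probability q^i) and then descends into a subtree hanging off the ancestral line. If the
   cluster has diameter at least 2n, some cluster vertex lies at distance at least n from x,
   so for some i the descent has length at least n - i. The expected number of open descending
   paths of length m from a vertex is (\<mu> p)^m, so a union bound gives the geometric sum
   \<Sum>_{i \<le> r} q^i (\<mu> p)^(n - i). *)

section \<open>Distances in the labelled tree\<close>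

lemma lcp_prefix_left: "prefix (lcp a b) a"
  by (induction a b rule: lcp.induct) auto

lemma lcp_prefix_right: "prefix (lcp a b) b"
  by (induction a b rule: lcp.induct) auto

lemma length_le_lcp: "prefix u a \<Longrightarrow> prefix u b \<Longrightarrow> length u \<le> length (lcp a b)"
proof (induction a b arbitrary: u rule: lcp.induct)
  case (1 a as b bs)
  then show ?case by (cases u) auto
qed auto

lemma min_length_lcp_le: "min (length (lcp y x)) (length (lcp z x)) \<le> length (lcp y z)"
proof -
  have "prefix (lcp y x) (lcp z x) \<or> prefix (lcp z x) (lcp y x)"
    using lcp_prefix_right prefix_same_cases by blast
  then show ?thesis
    by (metis length_le_lcp lcp_prefix_left min.coboundedI1 min.coboundedI2 prefix_order.trans)
qed

lemma tree_dist_triangle: "tree_dist y z \<le> tree_dist y x + tree_dist z x"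
proof -
  have lcp_le: "length (lcp a b) \<le> length a" "length (lcp a b) \<le> length b" for a b :: "nat list"
    using lcp_prefix_left lcp_prefix_right prefix_length_le by blast+
  show ?thesis
    unfolding tree_dist_def using lcp_le[of y z] lcp_le[of y x] lcp_le[of z x] min_length_lcp_le[of y x z]
    by arith
qed

lemma tree_dist_replicate_append_le:
  assumes "i \<le> r"
  shows "tree_dist (replicate (r - i) 0 @ w) (replicate r 0) \<le> i + length w"
proof -
  have "prefix (replicate (r - i) 0) (replicate r (0::nat))"
    using assms by (metis le_add_diff_inverse2 diff_le_self prefix_def replicate_add)
  then have "r - i \<le> length (lcp (replicate (r - i) 0 @ w) (replicate r 0))"
    using length_le_lcp[of "replicate (r - i) 0"] by simp
  then show ?thesis unfolding tree_dist_def using assms by simp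
qed

section \<open>Shape of the cluster of the source\<close>

definition open_descent :: "env \<Rightarrow> nat list \<Rightarrow> nat list \<Rightarrow> bool" where
  "open_descent \<omega> v w \<longleftrightarrow>
     (\<forall>k<length w. w ! k < fst (\<omega> (v @ take k w)) \<and> fst (snd (\<omega> (v @ take (Suc k) w))))"

definition open_ascent :: "env \<Rightarrow> nat \<Rightarrow> nat \<Rightarrow> bool" where
  "open_ascent \<omega> r i \<longleftrightarrow> (\<forall>k<i. snd (snd (\<omega> (replicate (r - k) 0))))"

lemma open_descent_Nil [simp]: "open_descent \<omega> v []"
  by (simp add: open_descent_def)

lemma open_descent_snoc:
  "open_descent \<omega> v (w @ [c]) \<longleftrightarrow>
     open_descent \<omega> v w \<and> c < fst (\<omega> (v @ w)) \<and> fst (snd (\<omega> (v @ w @ [c])))"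
  unfolding open_descent_def by (auto simp: nth_append less_Suc_eq)

lemma open_descent_Cons:
  "open_descent \<omega> v (c # w) \<longleftrightarrow>
     c < fst (\<omega> v) \<and> fst (snd (\<omega> (v @ [c]))) \<and> open_descent \<omega> (v @ [c]) w"
  unfolding open_descent_def by (auto simp: All_less_Suc2)

lemma open_descent_take: "open_descent \<omega> v w \<Longrightarrow> open_descent \<omega> v (take j w)"
  unfolding open_descent_def by (auto simp: min_def take_take)

lemma in_tree_snocD: "in_tree \<omega> (y @ [c]) \<Longrightarrow> c < fst (\<omega> y)"
  unfolding in_tree_def by (drule spec[of _ "length y"]) auto

text \<open>The condition on the head of w keeps the descent off the ancestral line, so the arrows
  used by the ascent and by the descent are disjoint.\<close>

lemma cluster_source_cases:
  assumes "y \<in> cluster \<omega> (source r)"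
  shows "\<exists>i\<le>r. open_ascent \<omega> r i \<and> (\<exists>w. y = replicate (r - i) 0 @ w \<and>
           open_descent \<omega> (replicate (r - i) 0) w \<and> (0 < i \<longrightarrow> w = [] \<or> hd w \<noteq> 0))"
proof -
  have "(source r, y) \<in> {(a, b). open_arrow \<omega> a b}\<^sup>*"
    using assms unfolding cluster_def by simp
  then show ?thesis
  proof (induction rule: rtrancl_induct)
    case base
    show ?case by (rule exI[of _ 0]) (auto simp: open_ascent_def source_def)
  next
    case (step y z)
    from step.IH obtain i w where i: "i \<le> r" "open_ascent \<omega> r i" "y = replicate (r - i) 0 @ w"
      "open_descent \<omega> (replicate (r - i) 0) w" "0 < i \<longrightarrow> w = [] \<or> hd w \<noteq> 0"
      by blast
    from step.hyps(2) consider
        (down) "in_tree \<omega> z" "z \<noteq> []" "y = butlast z" "fst (snd (\<omega> z))"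
      | (up) "in_tree \<omega> y" "y \<noteq> []" "z = butlast y" "snd (snd (\<omega> y))"
      unfolding open_arrow_def by blast
    then show ?case
    proof cases
      case down
      then obtain c where z: "z = y @ [c]" by (metis append_butlast_last_id)
      have "c < fst (\<omega> y)" using down(1) unfolding z by (rule in_tree_snocD)
      then have descent: "open_descent \<omega> (replicate (r - i) 0) (w @ [c])"
        unfolding open_descent_snoc using i(3,4) down(4) z by simp
      show ?thesis
      proof (cases "0 < i \<and> w = [] \<and> c = 0")
        case True
        then have "z = replicate (r - (i - 1)) 0 @ []"
          using i z by (simp add: replicate_append_same Suc_diff_le[symmetric])
             (metis Suc_diff_le Suc_pred diff_Suc_Suc replicate_Suc replicate_append_same)
        moreover have "open_ascent \<omega> r (i - 1)" using i(2) unfolding open_ascent_def by auto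
        ultimately show ?thesis using i by (intro exI[of _ "i - 1"]) auto
      next
        case False
        then have "0 < i \<longrightarrow> w @ [c] = [] \<or> hd (w @ [c]) \<noteq> 0" using i by (cases w) auto
        then show ?thesis using i descent z by (intro exI[of _ i]) auto
      qed
    next
      case up
      show ?thesis
      proof (cases "w = []")
        case True
        then have "i < r" using up i by auto
        moreover have "z = replicate (r - Suc i) 0 @ []"
          using up i True by (simp add: butlast_conv_take)
        moreover have "open_ascent \<omega> r (Suc i)"
          using i(2,3) up True unfolding open_ascent_def by (auto simp: less_Suc_eq)
        ultimately show ?thesis by (intro exI[of _ "Suc i"]) auto
      next
        case False
        have "z = replicate (r - i) 0 @ butlast w" using up i False by (simp add: butlast_append)
        moreover have "open_descent \<omega> (replicate (r - i) 0) (butlast w)"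
          using open_descent_take[OF i(4)] by (simp add: butlast_conv_take)
        moreover have "0 < i \<longrightarrow> butlast w = [] \<or> hd (butlast w) \<noteq> 0"
          using i(5) False by (cases w rule: rev_cases) (auto simp: hd_append split: if_splits)
        ultimately show ?thesis using i by blast
      qed
    qed
  qed
qed

lemma diam_ge_enat_iff:
  "enat k \<le> diam \<omega> x \<longleftrightarrow> (\<exists>y\<in>cluster \<omega> x. \<exists>z\<in>cluster \<omega> x. k \<le> tree_dist y z)"
proof -
  have "x \<in> cluster \<omega> x" by (simp add: cluster_def)
  then have nonempty: "cluster \<omega> x \<noteq> {}" by blast
  have enat_le_SUP_iff: "enat k \<le> (SUP y\<in>A. f y) \<longleftrightarrow> (\<exists>y\<in>A. enat k \<le> f y)"
    if "A \<noteq> {}" for A :: "nat list set" and f :: "nat list \<Rightarrow> enat"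
  proof (cases k)
    case 0
    then show ?thesis using that by (auto simp: zero_enat_def[symmetric])
  next
    case (Suc k')
    then show ?thesis by (simp add: Suc_ile_eq less_SUP_iff)
  qed
  show ?thesis unfolding diam_def enat_le_SUP_iff[OF nonempty] by simp
qed

definition open_branch :: "env \<Rightarrow> nat \<Rightarrow> nat list \<Rightarrow> bool" where
  "open_branch \<omega> m u \<longleftrightarrow> fst (snd (\<omega> u)) \<and> (\<exists>w. length w = m \<and> open_descent \<omega> u w)"

lemma open_branch_0: "open_branch \<omega> 0 u \<longleftrightarrow> fst (snd (\<omega> u))"
  by (simp add: open_branch_def)

lemma open_branch_Suc:
  "open_branch \<omega> (Suc m) u \<longleftrightarrow>
     (\<exists>c. (fst (snd (\<omega> u)) \<and> c < fst (\<omega> u)) \<and> open_branch \<omega> m (u @ [c]))"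
proof
  assume "open_branch \<omega> (Suc m) u"
  then obtain c w where "fst (snd (\<omega> u))" "length w = m" "open_descent \<omega> u (c # w)"
    unfolding open_branch_def by (metis length_Suc_conv)
  then show "\<exists>c. (fst (snd (\<omega> u)) \<and> c < fst (\<omega> u)) \<and> open_branch \<omega> m (u @ [c])"
    by (auto simp: open_branch_def open_descent_Cons)
next
  assume "\<exists>c. (fst (snd (\<omega> u)) \<and> c < fst (\<omega> u)) \<and> open_branch \<omega> m (u @ [c])"
  then obtain c w where "fst (snd (\<omega> u))" "c < fst (\<omega> u)" "fst (snd (\<omega> (u @ [c])))"
    "length w = m" "open_descent \<omega> (u @ [c]) w"
    unfolding open_branch_def by blast
  then show "open_branch \<omega> (Suc m) u"
    unfolding open_branch_def by (intro conjI exI[of _ "c # w"]) (simp_all add: open_descent_Cons)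
qed

lemma open_branch_cong:
  assumes "\<And>v. \<omega> (u @ v) = \<omega>' (u @ v)"
  shows "open_branch \<omega> m u = open_branch \<omega>' m u"
  using assms assms[of "[]"] unfolding open_branch_def open_descent_def by simp

lemma diam_ge_imp_open_branch:
  assumes "r < n" and "enat (2 * n) \<le> diam \<omega> (source r)"
  shows "\<exists>i\<le>r. \<exists>c. (open_ascent \<omega> r i \<and> c < fst (\<omega> (replicate (r - i) 0))) \<and> (0 < i \<longrightarrow> c \<noteq> 0)
           \<and> open_branch \<omega> (n - i - 1) (replicate (r - i) 0 @ [c])"
proof -
  let ?x = "source r"
  obtain y z where yz: "y \<in> cluster \<omega> ?x" "z \<in> cluster \<omega> ?x" "2 * n \<le> tree_dist y z"
    using assms(2) unfolding diam_ge_enat_iff by blast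
  have "n \<le> tree_dist y ?x \<or> n \<le> tree_dist z ?x"
    using tree_dist_triangle[of y z ?x] yz(3) by linarith
  then obtain y' where y': "y' \<in> cluster \<omega> ?x" "n \<le> tree_dist y' ?x" using yz by blast
  from cluster_source_cases[OF y'(1)] obtain i w where iw: "i \<le> r" "open_ascent \<omega> r i"
    "y' = replicate (r - i) 0 @ w" "open_descent \<omega> (replicate (r - i) 0) w"
    "0 < i \<longrightarrow> w = [] \<or> hd w \<noteq> 0" by blast
  have "tree_dist y' ?x \<le> i + length w"
    unfolding iw(3) source_def by (rule tree_dist_replicate_append_le[OF iw(1)])
  then have long: "n - i \<le> length w" using y'(2) by linarith
  then obtain c w' where w: "w = c # w'" using assms(1) iw(1) by (cases w) auto
  from iw(4)[unfolded w open_descent_Cons] have descent: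
    "c < fst (\<omega> (replicate (r - i) 0))" "fst (snd (\<omega> (replicate (r - i) 0 @ [c])))"
    "open_descent \<omega> (replicate (r - i) 0 @ [c]) w'" by auto
  have "open_branch \<omega> (n - i - 1) (replicate (r - i) 0 @ [c])"
    unfolding open_branch_def using descent long w
    by (intro conjI exI[of _ "take (n - i - 1) w'"]) (auto simp: open_descent_take)
  moreover have "0 < i \<longrightarrow> c \<noteq> 0" using iw(5) w by simp
  ultimately show ?thesis using iw(1,2) descent(1) by blast
qed

section \<open>Independent coordinates of a product of probability mass functions\<close>

lemma pred_PiM_component:
  fixes T :: "'b pmf"
  assumes "c \<in> K"
  shows "Measurable.pred (PiM K (\<lambda>_. measure_pmf T)) (\<lambda>\<omega>. R (\<omega> c))"
  unfolding pred_def
  using measurable_sets[OF measurable_component_singleton[OF assms], of "{t. R t}"]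
  by (simp add: vimage_def Int_def conj_commute)

lemma pred_const: "Measurable.pred M (\<lambda>_. K)"
  by (cases K) auto

lemma prob_space_PiM_pmf: "prob_space (PiM I (\<lambda>_. measure_pmf T))"
  by (rule prob_space_PiM) (simp add: prob_space_measure_pmf)

lemma prob_PiM_pmf_component:
  "measure (PiM UNIV (\<lambda>_. measure_pmf T)) {\<omega>\<in>space (PiM UNIV (\<lambda>_. measure_pmf T)). R (\<omega> c)}
     = measure_pmf.prob T {t. R t}"
proof -
  interpret product_prob_space "\<lambda>_. measure_pmf T" UNIV by unfold_locales
  have "emeasure (PiM UNIV (\<lambda>_. measure_pmf T))
      {\<omega>\<in>space (PiM UNIV (\<lambda>_. measure_pmf T)). \<omega> c \<in> {t. R t}} = emeasure (measure_pmf T) {t. R t}"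
    by (rule emeasure_PiM_Collect_single) auto
  then show ?thesis unfolding measure_def by simp
qed

lemma prob_PiM_pmf_components:
  assumes "finite J"
  shows "measure (PiM UNIV (\<lambda>_. measure_pmf T)) {\<omega>\<in>space (PiM UNIV (\<lambda>_. measure_pmf T)). \<forall>c\<in>J. \<omega> c \<in> X c}
    = (\<Prod>c\<in>J. measure_pmf.prob T (X c))"
proof -
  interpret product_prob_space "\<lambda>_. measure_pmf T" UNIV by unfold_locales
  have "emeasure (PiM UNIV (\<lambda>_. measure_pmf T))
      {\<omega>\<in>space (PiM UNIV (\<lambda>_. measure_pmf T)). \<forall>c\<in>J. \<omega> c \<in> X c}
      = (\<Prod>c\<in>J. emeasure (measure_pmf T) (X c))"
    by (rule emeasure_PiM_Collect) (use assms in auto)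
  moreover have "enn2real (\<Prod>c\<in>J. f c) = (\<Prod>c\<in>J. enn2real (f c))" for f :: "'a \<Rightarrow> ennreal"
    using assms by (induction J rule: finite_induct) (auto simp: enn2real_mult)
  ultimately show ?thesis unfolding measure_def by simp
qed

lemma prob_PiM_pmf_conj_disjoint:
  fixes T :: "'b pmf" and A B :: "'a set"
  defines "M \<equiv> PiM UNIV (\<lambda>_. measure_pmf T)"
  assumes disjoint: "A \<inter> B = {}"
    and P_meas: "Measurable.pred (PiM A (\<lambda>_. measure_pmf T)) P"
    and Q_meas: "Measurable.pred (PiM B (\<lambda>_. measure_pmf T)) Q"
    and P_cong: "\<And>\<omega> \<omega>'. (\<forall>c\<in>A. \<omega> c = \<omega>' c) \<Longrightarrow> P \<omega> = P \<omega>'"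
    and Q_cong: "\<And>\<omega> \<omega>'. (\<forall>c\<in>B. \<omega> c = \<omega>' c) \<Longrightarrow> Q \<omega> = Q \<omega>'"
  shows "measure M {\<omega>\<in>space M. P \<omega> \<and> Q \<omega>} = measure M {\<omega>\<in>space M. P \<omega>} * measure M {\<omega>\<in>space M. Q \<omega>}"
proof -
  interpret product_prob_space "\<lambda>_ :: 'a. measure_pmf T" UNIV by unfold_locales
  interpret M: prob_space M unfolding M_def by (rule P.prob_space_axioms)
  have indep: "M.indep_vars (\<lambda>_. measure_pmf T) (\<lambda>i \<omega>. \<omega> i) UNIV"
  proof (subst M.indep_vars_iff_distr_eq_PiM)
    show "\<And>i. (\<lambda>\<omega>. \<omega> i) \<in> measurable M (measure_pmf T)"
      unfolding M_def by (rule measurable_component_singleton) simp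
    have "(\<lambda>x. \<lambda>i\<in>UNIV. x i) = (\<lambda>x :: 'a \<Rightarrow> 'b. x)" by (simp add: fun_eq_iff)
    then have "distr M (PiM UNIV (\<lambda>_. measure_pmf T)) (\<lambda>x. \<lambda>i\<in>UNIV. x i) = M"
      unfolding M_def by (simp only:) (rule distr_id2, simp)
    also have "\<dots> = PiM UNIV (\<lambda>i. distr M (measure_pmf T) (\<lambda>\<omega>. \<omega> i))"
      unfolding M_def using PiM_component by simp
    finally show "distr M (PiM UNIV (\<lambda>_. measure_pmf T)) (\<lambda>x. \<lambda>i\<in>UNIV. x i)
        = PiM UNIV (\<lambda>i. distr M (measure_pmf T) (\<lambda>\<omega>. \<omega> i))" .
  qed simp
  have indep_AB: "M.indep_var (PiM A (\<lambda>_. measure_pmf T)) (\<lambda>\<omega>. restrict \<omega> A)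
      (PiM B (\<lambda>_. measure_pmf T)) (\<lambda>\<omega>. restrict \<omega> B)"
    using M.indep_var_restrict[OF indep disjoint] by simp
  have P_sets: "{f\<in>space (PiM A (\<lambda>_. measure_pmf T)). P f} \<in> sets (PiM A (\<lambda>_. measure_pmf T))"
    using P_meas by (simp only: pred_def)
  have Q_sets: "{f\<in>space (PiM B (\<lambda>_. measure_pmf T)). Q f} \<in> sets (PiM B (\<lambda>_. measure_pmf T))"
    using Q_meas by (simp only: pred_def)
  have "P (restrict \<omega> A) = P \<omega>" "Q (restrict \<omega> B) = Q \<omega>" for \<omega>
    by (simp_all add: P_cong Q_cong)
  moreover have "restrict \<omega> A \<in> space (PiM A (\<lambda>_. measure_pmf T))"
    "restrict \<omega> B \<in> space (PiM B (\<lambda>_. measure_pmf T))" for \<omega>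
    by (simp_all add: space_PiM)
  ultimately show ?thesis
    using M.indep_varD[OF indep_AB P_sets Q_sets] by (simp add: vimage_def Int_def conj_commute)
qed

lemma tail_probs_sums_expectation:
  fixes N :: "nat pmf"
  assumes "integrable (measure_pmf N) real"
  shows "(\<lambda>c. measure_pmf.prob N {c<..}) sums measure_pmf.expectation N real"
proof -
  have tail_sum: "ennreal (real x) = (\<Sum>c. indicator {c<..} x)" for x :: nat
  proof -
    have "(\<Sum>c. indicator {c<..} x :: ennreal) = (\<Sum>c<x. indicator {c<..} x)"
      by (rule suminf_finite) auto
    then show ?thesis by (simp add: ennreal_of_nat_eq_real_of_nat)
  qed
  have "ennreal (measure_pmf.expectation N real) = (\<integral>\<^sup>+x. ennreal (real x) \<partial>measure_pmf N)"
    by (rule nn_integral_eq_integral[symmetric]) (auto intro: assms)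
  also have "\<dots> = (\<Sum>c. \<integral>\<^sup>+x. indicator {c<..} x \<partial>measure_pmf N)"
    unfolding tail_sum by (rule nn_integral_suminf) simp
  also have "\<dots> = (\<Sum>c. ennreal (measure_pmf.prob N {c<..}))"
    by (simp add: measure_pmf.emeasure_eq_measure)
  finally have "(\<lambda>c. ennreal (measure_pmf.prob N {c<..})) sums ennreal (measure_pmf.expectation N real)"
    using summable_sums[OF summableI, of "\<lambda>c. ennreal (measure_pmf.prob N {c<..})"] by simp
  then show ?thesis by simp
qed

lemma measure_le_sums_cover:
  assumes "finite_measure M" and "A \<subseteq> (\<Union>c. B c)" and "\<And>c. B c \<in> sets M"
    and "\<And>c. measure M (B c) \<le> f c" and "f sums s"
  shows "measure M A \<le> s"
proof -
  interpret finite_measure M by fact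
  have summable: "summable (\<lambda>c. measure M (B c))"
    by (rule summable_comparison_test[of _ f]) (use assms(4) sums_summable[OF assms(5)] in auto)
  have "measure M A \<le> measure M (\<Union>c. B c)"
    by (rule finite_measure_mono) (use assms(2,3) in auto)
  also have "\<dots> \<le> (\<Sum>c. measure M (B c))"
    by (rule finite_measure_subadditive_countably) (use assms(3) summable in auto)
  also have "\<dots> \<le> s"
    using assms(4,5) summable by (auto intro: suminf_le simp: sums_iff)
  finally show ?thesis .
qed

section \<open>Measurability\<close>

lemma pred_open_branch:
  assumes "range ((@) u) \<subseteq> K"
  shows "Measurable.pred (PiM K (\<lambda>_. measure_pmf T)) (\<lambda>\<omega>. open_branch \<omega> m u)"
proof -
  have subtree: "u @ v \<in> K" for v using assms by auto
  moreover have "u \<in> K" using subtree[of "[]"] by simp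
  ultimately show ?thesis
    unfolding open_branch_def open_descent_def
    by (intro pred_intros_countable(2) pred_intros_conj1' pred_intros_logic(3)
        pred_intros_countable(1) pred_intros_imp' pred_PiM_component)
qed

lemma pred_open_ascent:
  assumes "(\<lambda>k. replicate (r - k) 0) ` {..<i} \<subseteq> K"
  shows "Measurable.pred (PiM K (\<lambda>_. measure_pmf T)) (\<lambda>\<omega>. open_ascent \<omega> r i)"
proof -
  have "k < i \<Longrightarrow> replicate (r - k) 0 \<in> K" for k using assms by auto
  then show ?thesis unfolding open_ascent_def
    by (intro pred_intros_countable(1) pred_intros_imp' pred_PiM_component)
qed

lemma pred_open_arrow: "Measurable.pred (PiM UNIV (\<lambda>_. measure_pmf T)) (\<lambda>\<omega>. open_arrow \<omega> a b)"
  unfolding open_arrow_def in_tree_def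
  by (intro pred_intros_logic(5) pred_intros_logic(3) pred_intros_countable(1) pred_intros_imp'
      pred_PiM_component pred_const UNIV_I)

lemma pred_relpow_open_arrow:
  "Measurable.pred (PiM UNIV (\<lambda>_. measure_pmf T)) (\<lambda>\<omega>. (x, y) \<in> {(a, b). open_arrow \<omega> a b} ^^ m)"
proof (induction m arbitrary: y)
  case 0
  show ?case by (simp add: pred_const)
next
  case (Suc m)
  have "(x, y) \<in> {(a, b). open_arrow \<omega> a b} ^^ Suc m \<longleftrightarrow>
      (\<exists>z. (x, z) \<in> {(a, b). open_arrow \<omega> a b} ^^ m \<and> open_arrow \<omega> z y)" for \<omega>
    by auto
  then show ?case
    by (simp only:) (intro pred_intros_countable(2) pred_intros_logic(3) Suc pred_open_arrow)
qed

lemma sets_diam_ge: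
  "{\<omega>\<in>space (PiM UNIV (\<lambda>_. measure_pmf T)). enat k \<le> diam \<omega> x} \<in> sets (PiM UNIV (\<lambda>_. measure_pmf T))"
proof -
  have "Measurable.pred (PiM UNIV (\<lambda>_. measure_pmf T)) (\<lambda>\<omega>. y \<in> cluster \<omega> x)" for y
    unfolding cluster_def mem_Collect_eq rtrancl_power
    by (intro pred_intros_countable(2) pred_relpow_open_arrow)
  then have "Measurable.pred (PiM UNIV (\<lambda>_. measure_pmf T)) (\<lambda>\<omega>. enat k \<le> diam \<omega> x)"
    unfolding diam_ge_enat_iff Bex_def
    by (intro pred_intros_countable(2) pred_intros_logic(3) pred_const)
  then show ?thesis unfolding pred_def .
qed

definition site_pmf :: "nat pmf \<Rightarrow> real \<Rightarrow> real \<Rightarrow> (nat \<times> bool \<times> bool) pmf" where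
  "site_pmf N p q = pair_pmf N (pair_pmf (bernoulli_pmf p) (bernoulli_pmf q))"

lemma GW_env_eq_PiM_site_pmf: "GW_env N p q = PiM UNIV (\<lambda>_. measure_pmf (site_pmf N p q))"
  by (simp add: GW_env_def site_pmf_def)

lemma prob_site_pmf_Times:
  "measure_pmf.prob (site_pmf N p q) (C \<times> D \<times> E) =
     measure_pmf.prob N C * measure_pmf.prob (bernoulli_pmf p) D * measure_pmf.prob (bernoulli_pmf q) E"
  unfolding site_pmf_def by (simp add: measure_pmf_prob_product)

lemma replicate_ne_replicate_append_Cons:
  fixes c :: nat
  assumes "k \<le> i" and "i \<le> r" and "c \<noteq> 0 \<or> i = 0"
  shows "replicate (r - k) 0 \<noteq> replicate (r - i) 0 @ c # v"
proof
  assume eq: "replicate (r - k) 0 = replicate (r - i) 0 @ c # v"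
  have "r - k = r - i + 1 + length v" using arg_cong[OF eq, of length] by simp
  then have "0 < i" and "r - i < r - k" using assms by auto
  have "c = replicate (r - k) 0 ! (r - i)" unfolding eq by (simp add: nth_append)
  also have "\<dots> = 0" using \<open>r - i < r - k\<close> by (rule nth_replicate)
  finally show False using \<open>0 < i\<close> assms(3) by simp
qed

locale gw_percolation =
  fixes N :: "nat pmf" and p q \<mu> :: real
  assumes p: "0 \<le> p" "p \<le> 1" and q: "0 \<le> q" "q \<le> 1"
    and integrable: "integrable (measure_pmf N) real"
    and \<mu>_def: "\<mu> = measure_pmf.expectation N real"
begin

abbreviation M :: "env measure" where
  "M \<equiv> PiM UNIV (\<lambda>_. measure_pmf (site_pmf N p q))"

lemma tail_probs_sums_\<mu>: "(\<lambda>c. measure_pmf.prob N {c<..}) sums \<mu>"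
  using tail_probs_sums_expectation[OF integrable] by (simp add: \<mu>_def)

lemma \<mu>_nonneg: "0 \<le> \<mu>"
  by (simp add: \<mu>_def)

lemma prob_site_down_open: "measure_pmf.prob (site_pmf N p q) {t. fst (snd t)} = p"
proof -
  have sets: "{t. fst (snd t)} = UNIV \<times> {True} \<times> (UNIV :: bool set)" by auto
  show ?thesis unfolding sets prob_site_pmf_Times using p by (simp add: measure_pmf_single)
qed

lemma prob_site_down_open_offspring_gt:
  "measure_pmf.prob (site_pmf N p q) {t. fst (snd t) \<and> c < fst t} = measure_pmf.prob N {c<..} * p"
proof -
  have sets: "{t. fst (snd t) \<and> c < fst t} = {c<..} \<times> {True} \<times> (UNIV :: bool set)" by auto
  show ?thesis unfolding sets prob_site_pmf_Times using p by (simp add: measure_pmf_single)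
qed

lemma prob_site_up_open: "measure_pmf.prob (site_pmf N p q) {t. snd (snd t)} = q"
proof -
  have sets: "{t. snd (snd t)} = UNIV \<times> (UNIV :: bool set) \<times> {True}" by auto
  show ?thesis unfolding sets prob_site_pmf_Times using q by (simp add: measure_pmf_single)
qed

lemma prob_site_offspring_gt: "measure_pmf.prob (site_pmf N p q) {t. c < fst t} = measure_pmf.prob N {c<..}"
proof -
  have sets: "{t. c < fst t} = {c<..} \<times> (UNIV :: bool set) \<times> (UNIV :: bool set)" by auto
  show ?thesis unfolding sets prob_site_pmf_Times by simp
qed

lemma \<mu>_ge_1:
  assumes "pmf N 0 = 0"
  shows "1 \<le> \<mu>"
proof -
  have "{0<..} = space (measure_pmf N) - {0}" by auto
  then have "measure_pmf.prob N {0<..} = 1 - measure_pmf.prob N {0}"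
    by (simp only: measure_pmf.prob_compl sets_measure_pmf UNIV_I)
  then have "measure_pmf.prob N {0<..} = 1" using assms by (simp add: measure_pmf_single)
  moreover have "(\<Sum>c\<in>{0}. measure_pmf.prob N {c<..}) \<le> (\<Sum>c. measure_pmf.prob N {c<..})"
    by (rule sum_le_suminf) (use sums_summable[OF tail_probs_sums_\<mu>] in auto)
  ultimately show ?thesis using sums_unique[OF tail_probs_sums_\<mu>] by simp
qed

lemma prob_child_open_branch:
  "measure M {\<omega>\<in>space M. (fst (snd (\<omega> u)) \<and> c < fst (\<omega> u)) \<and> open_branch \<omega> m (u @ [c])}
     = measure_pmf.prob N {c<..} * p * measure M {\<omega>\<in>space M. open_branch \<omega> m (u @ [c])}"
proof -
  have "measure M {\<omega>\<in>space M. (fst (snd (\<omega> u)) \<and> c < fst (\<omega> u)) \<and> open_branch \<omega> m (u @ [c])}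
      = measure M {\<omega>\<in>space M. fst (snd (\<omega> u)) \<and> c < fst (\<omega> u)}
        * measure M {\<omega>\<in>space M. open_branch \<omega> m (u @ [c])}"
  proof (rule prob_PiM_pmf_conj_disjoint[where A="{u}" and B="range ((@) (u @ [c]))"])
    show "Measurable.pred (PiM {u} (\<lambda>_. measure_pmf (site_pmf N p q)))
        (\<lambda>\<omega>. fst (snd (\<omega> u)) \<and> c < fst (\<omega> u))"
      by (rule pred_PiM_component[where R="\<lambda>t. fst (snd t) \<and> c < fst t", simplified]) simp
    show "Measurable.pred (PiM (range ((@) (u @ [c]))) (\<lambda>_. measure_pmf (site_pmf N p q)))
        (\<lambda>\<omega>. open_branch \<omega> m (u @ [c]))"
      by (rule pred_open_branch) simp
    show "open_branch \<omega> m (u @ [c]) = open_branch \<omega>' m (u @ [c])"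
      if "\<forall>v\<in>range ((@) (u @ [c])). \<omega> v = \<omega>' v" for \<omega> \<omega>' :: env
      by (rule open_branch_cong) (use that in blast)
  qed auto
  also have "measure M {\<omega>\<in>space M. fst (snd (\<omega> u)) \<and> c < fst (\<omega> u)} = measure_pmf.prob N {c<..} * p"
    using prob_PiM_pmf_component[of "site_pmf N p q" "\<lambda>t. fst (snd t) \<and> c < fst t" u]
    by (simp add: prob_site_down_open_offspring_gt)
  finally show ?thesis .
qed

lemma prob_open_branch_le: "measure M {\<omega>\<in>space M. open_branch \<omega> m u} \<le> p * (\<mu> * p) ^ m"
proof (induction m arbitrary: u)
  case 0
  show ?case
    using prob_PiM_pmf_component[of "site_pmf N p q" "\<lambda>t. fst (snd t)" u]
    by (simp add: open_branch_0 prob_site_down_open)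
next
  case (Suc m)
  define B where "B c = {\<omega>\<in>space M. (fst (snd (\<omega> u)) \<and> c < fst (\<omega> u)) \<and> open_branch \<omega> m (u @ [c])}" for c
  define f where "f c = measure_pmf.prob N {c<..} * p * (p * (\<mu> * p) ^ m)" for c
  have "measure M (B c) \<le> f c" for c
    unfolding B_def f_def prob_child_open_branch using Suc.IH[of "u @ [c]"] p
    by (intro mult_left_mono) auto
  moreover have "f sums (\<mu> * (p * (p * (\<mu> * p) ^ m)))"
    unfolding f_def mult.assoc by (rule sums_mult2[OF tail_probs_sums_\<mu>])
  moreover have "B c \<in> sets M" for c
    unfolding B_def pred_def[symmetric]
    by (intro pred_intros_logic(3) pred_PiM_component pred_open_branch) auto
  moreover have "{\<omega>\<in>space M. open_branch \<omega> (Suc m) u} \<subseteq> (\<Union>c. B c)"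
    unfolding B_def by (auto simp: open_branch_Suc)
  ultimately show ?case
    using measure_le_sums_cover[OF prob_space_PiM_pmf[THEN prob_space.finite_measure], where B=B and f=f]
    by (simp add: algebra_simps)
qed

lemma prob_open_ascent_offspring_gt:
  assumes "i \<le> r"
  shows "measure M {\<omega>\<in>space M. open_ascent \<omega> r i \<and> c < fst (\<omega> (replicate (r - i) 0))}
    = q ^ i * measure_pmf.prob N {c<..}"
proof -
  define v where "v k = replicate (r - k) (0::nat)" for k
  define X where "X u = (if u = v i then {t :: nat \<times> bool \<times> bool. c < fst t} else {t. snd (snd t)})" for u
  have inj: "inj_on v {..i}"
    by (rule inj_onI) (use assms in \<open>auto simp: v_def dest: arg_cong[of _ _ length]\<close>)
  have v_ne: "v k \<noteq> v i" if "k < i" for k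
    using that assms unfolding v_def by (auto dest: arg_cong[of _ _ length])
  have "(\<forall>u\<in>v ` {..i}. \<omega> u \<in> X u) \<longleftrightarrow> open_ascent \<omega> r i \<and> c < fst (\<omega> (v i))" for \<omega> :: env
    using v_ne unfolding open_ascent_def X_def v_def[symmetric] by (auto simp: le_less)
  then have "measure M {\<omega>\<in>space M. open_ascent \<omega> r i \<and> c < fst (\<omega> (v i))}
      = (\<Prod>u\<in>v ` {..i}. measure_pmf.prob (site_pmf N p q) (X u))"
    using prob_PiM_pmf_components[of "v ` {..i}" "site_pmf N p q" X] by simp
  also have "\<dots> = (\<Prod>k\<le>i. measure_pmf.prob (site_pmf N p q) (X (v k)))"
    by (rule prod.reindex[OF inj, unfolded comp_def])
  also have "\<dots> = (\<Prod>k<i. measure_pmf.prob (site_pmf N p q) (X (v k))) *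
      measure_pmf.prob (site_pmf N p q) (X (v i))"
    by (simp add: lessThan_Suc_atMost[symmetric])
  also have "\<dots> = q ^ i * measure_pmf.prob N {c<..}"
    using v_ne by (simp add: X_def prob_site_up_open prob_site_offspring_gt)
  finally show ?thesis unfolding v_def .
qed

definition ascent_branch_event :: "nat \<Rightarrow> nat \<Rightarrow> nat \<Rightarrow> nat \<Rightarrow> env set" where
  "ascent_branch_event r i m c = {\<omega>\<in>space M.
     (open_ascent \<omega> r i \<and> c < fst (\<omega> (replicate (r - i) 0))) \<and> (0 < i \<longrightarrow> c \<noteq> 0)
     \<and> open_branch \<omega> m (replicate (r - i) 0 @ [c])}"

lemma sets_ascent_branch_event: "ascent_branch_event r i m c \<in> sets M"
  unfolding ascent_branch_event_def pred_def[symmetric]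
  by (intro pred_intros_logic(3) pred_open_ascent pred_PiM_component[where R="\<lambda>t. c < fst t", simplified]
      pred_open_branch pred_const) auto

lemma prob_ascent_branch_event:
  assumes "i \<le> r" and "c \<noteq> 0 \<or> i = 0"
  shows "measure M (ascent_branch_event r i m c) = q ^ i * measure_pmf.prob N {c<..} *
    measure M {\<omega>\<in>space M. open_branch \<omega> m (replicate (r - i) 0 @ [c])}"
proof -
  define a where "a = replicate (r - i) (0::nat)"
  define A where "A = (\<lambda>k. replicate (r - k) (0::nat)) ` {..i}"
  have event: "ascent_branch_event r i m c =
      {\<omega>\<in>space M. (open_ascent \<omega> r i \<and> c < fst (\<omega> a)) \<and> open_branch \<omega> m (a @ [c])}"
    unfolding ascent_branch_event_def a_def using assms(2) by auto
  have "measure M (ascent_branch_event r i m c) =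
      measure M {\<omega>\<in>space M. open_ascent \<omega> r i \<and> c < fst (\<omega> a)} *
      measure M {\<omega>\<in>space M. open_branch \<omega> m (a @ [c])}"
    unfolding event
  proof (rule prob_PiM_pmf_conj_disjoint[where A=A and B="range ((@) (a @ [c]))"])
    have "replicate (r - k) 0 \<noteq> a @ c # v" if "k \<le> i" for k v
      unfolding a_def by (rule replicate_ne_replicate_append_Cons[OF that assms])
    then show "A \<inter> range ((@) (a @ [c])) = {}" unfolding A_def by auto
    show "Measurable.pred (PiM A (\<lambda>_. measure_pmf (site_pmf N p q)))
        (\<lambda>\<omega>. open_ascent \<omega> r i \<and> c < fst (\<omega> a))"
      by (intro pred_intros_logic(3) pred_open_ascent pred_PiM_component[where R="\<lambda>t. c < fst t", simplified])
        (auto simp: A_def a_def)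
    show "Measurable.pred (PiM (range ((@) (a @ [c]))) (\<lambda>_. measure_pmf (site_pmf N p q)))
        (\<lambda>\<omega>. open_branch \<omega> m (a @ [c]))"
      by (rule pred_open_branch) simp
    show "(open_ascent \<omega> r i \<and> c < fst (\<omega> a)) = (open_ascent \<omega>' r i \<and> c < fst (\<omega>' a))"
      if "\<forall>u\<in>A. \<omega> u = \<omega>' u" for \<omega> \<omega>' :: env
    proof -
      have "\<omega> (replicate (r - k) 0) = \<omega>' (replicate (r - k) 0)" if "k \<le> i" for k
        using \<open>\<forall>u\<in>A. \<omega> u = \<omega>' u\<close> that unfolding A_def by simp
      then show ?thesis unfolding open_ascent_def a_def by simp
    qed
    show "open_branch \<omega> m (a @ [c]) = open_branch \<omega>' m (a @ [c])"
      if "\<forall>u\<in>range ((@) (a @ [c])). \<omega> u = \<omega>' u" for \<omega> \<omega>' :: env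
      by (rule open_branch_cong) (use that in blast)
  qed
  then show ?thesis unfolding a_def prob_open_ascent_offspring_gt[OF assms(1)] .
qed

lemma prob_ascent_branch_event_le:
  assumes "i \<le> r"
  shows "measure M (\<Union>c. ascent_branch_event r i m c) \<le> q ^ i * (\<mu> * p) ^ Suc m"
proof -
  define f where "f c = measure_pmf.prob N {c<..} * (q ^ i * (p * (\<mu> * p) ^ m))" for c
  have bound: "measure M (ascent_branch_event r i m c) \<le> f c" for c
  proof (cases "c \<noteq> 0 \<or> i = 0")
    case True
    have "q ^ i * measure_pmf.prob N {c<..} *
        measure M {\<omega>\<in>space M. open_branch \<omega> m (replicate (r - i) 0 @ [c])}
        \<le> q ^ i * measure_pmf.prob N {c<..} * (p * (\<mu> * p) ^ m)"
      using q by (intro mult_left_mono prob_open_branch_le) simp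
    then show ?thesis unfolding f_def prob_ascent_branch_event[OF assms True] by (simp add: algebra_simps)
  next
    case False
    then have "ascent_branch_event r i m c = {}" unfolding ascent_branch_event_def by auto
    then show ?thesis unfolding f_def using p q \<mu>_nonneg by simp
  qed
  have "f sums (\<mu> * (q ^ i * (p * (\<mu> * p) ^ m)))"
    unfolding f_def by (rule sums_mult2[OF tail_probs_sums_\<mu>])
  then have sums: "f sums (q ^ i * (\<mu> * p) ^ Suc m)" by (simp add: algebra_simps)
  show ?thesis
    by (rule measure_le_sums_cover[OF prob_space_PiM_pmf[THEN prob_space.finite_measure] subset_refl
          sets_ascent_branch_event bound sums])
qed

lemma prob_diam_ge_le:
  assumes "r < n"
  shows "measure M {\<omega>\<in>space M. enat (2 * n) \<le> diam \<omega> (source r)} \<le> (\<Sum>i\<le>r. q ^ i * (\<mu> * p) ^ (n - i))"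
proof -
  let ?U = "\<Union>i\<in>{..r}. \<Union>c. ascent_branch_event r i (n - i - 1) c"
  have "{\<omega>\<in>space M. enat (2 * n) \<le> diam \<omega> (source r)} \<subseteq> ?U"
  proof
    fix \<omega> assume "\<omega> \<in> {\<omega>\<in>space M. enat (2 * n) \<le> diam \<omega> (source r)}"
    then have "\<omega> \<in> space M" and "enat (2 * n) \<le> diam \<omega> (source r)" by auto
    with diam_ge_imp_open_branch[OF assms] obtain i c where "i \<le> r"
      and "\<omega> \<in> ascent_branch_event r i (n - i - 1) c"
      unfolding ascent_branch_event_def by blast
    then show "\<omega> \<in> ?U" by blast
  qed
  moreover have "?U \<in> sets M"
    by (intro sets.finite_UN sets.countable_UN) (auto intro: sets_ascent_branch_event)
  ultimately have "measure M {\<omega>\<in>space M. enat (2 * n) \<le> diam \<omega> (source r)} \<le> measure M ?U"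
    by (rule finite_measure.finite_measure_mono[OF prob_space_PiM_pmf[THEN prob_space.finite_measure]])
  also have "\<dots> \<le> (\<Sum>i\<le>r. measure M (\<Union>c. ascent_branch_event r i (n - i - 1) c))"
    by (rule measure_UNION_le) (auto intro: sets_ascent_branch_event)
  also have "\<dots> \<le> (\<Sum>i\<le>r. q ^ i * (\<mu> * p) ^ Suc (n - i - 1))"
    by (intro sum_mono prob_ascent_branch_event_le) simp
  also have "\<dots> = (\<Sum>i\<le>r. q ^ i * (\<mu> * p) ^ (n - i))"
    using assms by (intro sum.cong) (auto simp: Suc_diff_Suc)
  finally show ?thesis .
qed

end

lemma sum_geometric_times_power:
  fixes a b :: "'a :: field"
  assumes "a \<noteq> 0" and "b \<noteq> a" and "r \<le> n"
  shows "(\<Sum>i\<le>r. b ^ i * a ^ (n - i)) = (1 - (b / a) ^ (r + 1)) / (1 - b / a) * a ^ n"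
proof -
  have "b ^ i * a ^ (n - i) = (b / a) ^ i * a ^ n" if "i \<le> r" for i
    using that assms by (simp add: power_divide power_diff)
  then have "(\<Sum>i\<le>r. b ^ i * a ^ (n - i)) = (\<Sum>i<Suc r. (b / a) ^ i) * a ^ n"
    by (simp add: sum_distrib_right lessThan_Suc_atMost)
  also have "(\<Sum>i<Suc r. (b / a) ^ i) = (1 - (b / a) ^ (r + 1)) / (1 - b / a)"
    using assms(1,2) by (subst sum_gp_strict) auto
  finally show ?thesis .
qed

theorem theorem3:
  fixes off :: "nat pmf" and p q \<mu> :: real and r n :: nat
  assumes "pmf off 0 = 0"
    and "integrable (measure_pmf off) real"
    and "\<mu> = measure_pmf.expectation off real"
    and "0 < p" and "p < 1" and "0 < q" and "q < 1"
    and "\<mu> * p < 1" and "q \<noteq> \<mu> * p"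
    and "r < n"
  shows "{\<omega> \<in> space (GW_env off p q). diam \<omega> (source r) \<ge> enat (2 * n)} \<in> sets (GW_env off p q) \<and>
         measure (GW_env off p q) {\<omega> \<in> space (GW_env off p q). diam \<omega> (source r) \<ge> enat (2 * n)}
           \<le> (1 - (q / (\<mu> * p)) ^ (r + 1)) / (1 - q / (\<mu> * p)) * (\<mu> * p) ^ n"
proof -
  interpret gw_percolation off p q \<mu>
    by unfold_locales (use assms in auto)
  have "\<mu> * p \<noteq> 0" using \<mu>_ge_1[OF assms(1)] assms(4) by simp
  then have "(\<Sum>i\<le>r. q ^ i * (\<mu> * p) ^ (n - i)) = (1 - (q / (\<mu> * p)) ^ (r + 1)) / (1 - q / (\<mu> * p)) * (\<mu> * p) ^ n"
    using assms(9,10) by (intro sum_geometric_times_power) auto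
  then show ?thesis
    using sets_diam_ge prob_diam_ge_le[OF assms(10)] unfolding GW_env_eq_PiM_site_pmf by simp
qed

end
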